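(* Let $B\in\mathbb{C}^{n\times n}$ be nonzero of rank $r$ with Hartwig–Spindelböck decomposition $B=U\begin{bmatrix}\Sigma K&\Sigma L\\0&0\end{bmatrix}U^*$. Then $B$ is bi-dagger, i.e. $(B^2)^\dagger=(B^\dagger)^2$, if and only if $(\Sigma K\Sigma)^\dagger=\Sigma^{-1}K^*\Sigma^{-1}$.
   Context: $M^*$ is the conjugate transpose, $M^\dagger$ the Moore–Penrose inverse. Hartwig–Spindelböck decomposition: every $B\in\mathbb{C}^{n\times n}$ of rank $r>0$ can be written $B=U\begin{bmatrix}\Sigma K&\Sigma L\\0&0\end{bmatrix}U^*$ with $U$ unitary, $\Sigma\in\mathbb{C}^{r\times r}$ the positive diagonal matrix of nonzero singular values of $B$, $K\in\mathbb{C}^{r\times r}$, $L\in\mathbb{C}^{r\times(n-r)}$ with $KK^*+LL^*=I_r$. *)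

theory Defs
  imports "Jordan_Normal_Form.Schur_Decomposition" "Jordan_Normal_Form.DL_Rank"
begin

definition unitary_mat :: "nat \<Rightarrow> complex mat \<Rightarrow> bool" where
  "unitary_mat n U \<longleftrightarrow> U \<in> carrier_mat n n \<and> U * mat_adjoint U = 1\<^sub>m n \<and> mat_adjoint U * U = 1\<^sub>m n"

definition is_MP_inverse :: "complex mat \<Rightarrow> complex mat \<Rightarrow> bool" where
  "is_MP_inverse A X \<longleftrightarrow> X \<in> carrier_mat (dim_col A) (dim_row A) \<and>
     A * X * A = A \<and> X * A * X = X \<and>
     mat_adjoint (A * X) = A * X \<and> mat_adjoint (X * A) = X * A"

text \<open>Moore--Penrose inverse (exists and is unique).\<close>
definition MP_inverse :: "complex mat \<Rightarrow> complex mat" where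
  "MP_inverse A = (THE X. is_MP_inverse A X)"

end

theory Submission
  imports Defs
begin

(*
  The Hartwig-Spindelboeck form factors B as P \<Sigma> Q, where P = U [I; 0] has orthonormal
  columns, Q = [K L] U\<^sup>* has orthonormal rows (as K K\<^sup>* + L L\<^sup>* = I) and Q P = K.
  Such outer factors commute with the Moore-Penrose inverse, (P M Q)\<^sup>\<dagger> = Q\<^sup>* M\<^sup>\<dagger> P\<^sup>*.
  Hence B\<^sup>\<dagger> = Q\<^sup>* \<Sigma>\<^sup>-\<^sup>1 P\<^sup>*, (B\<^sup>2)\<^sup>\<dagger> = (P (\<Sigma> K \<Sigma>) Q)\<^sup>\<dagger> = Q\<^sup>* (\<Sigma> K \<Sigma>)\<^sup>\<dagger> P\<^sup>* and
  (B\<^sup>\<dagger>)\<^sup>2 = Q\<^sup>* \<Sigma>\<^sup>-\<^sup>1 K\<^sup>* \<Sigma>\<^sup>-\<^sup>1 P\<^sup>*, and the outer factors cancel.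

  That the Moore-Penrose inverse exists is proved along the way: it is assembled from
  least-squares inverses (A C A = A with A C Hermitian) of A and A\<^sup>*, and a least-squares
  inverse is built column by column, enlarging the orthogonal projector A C onto the span
  of the first k columns of A by the rank-one term w w\<^sup>* / (w\<^sup>* w), where w is the
  component of the next column orthogonal to that span.
*)

lemma mat_adjoint_altdef:
  "mat_adjoint (A :: complex mat) = mat (dim_col A) (dim_row A) (\<lambda>(i, j). cnj (A $$ (j, i)))"
  unfolding mat_adjoint_def mat_of_rows_def by (rule eq_matI) auto

lemma dim_mat_adjoint [simp]:
  "dim_row (mat_adjoint (A :: complex mat)) = dim_col A"
  "dim_col (mat_adjoint A) = dim_row A"
  by (auto simp: mat_adjoint_altdef)

lemma index_mat_adjoint [simp]:
  "i < dim_col A \<Longrightarrow> j < dim_row A \<Longrightarrow> mat_adjoint (A :: complex mat) $$ (i, j) = cnj (A $$ (j, i))"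
  by (simp add: mat_adjoint_altdef)

lemma mat_adjoint_carrier [simp]: "(A :: complex mat) \<in> carrier_mat m n \<Longrightarrow> mat_adjoint A \<in> carrier_mat n m"
  by (metis carrier_matD carrier_matI dim_mat_adjoint)

lemma mat_adjoint_adjoint [simp]: "mat_adjoint (mat_adjoint (A :: complex mat)) = A"
  by (rule eq_matI) simp_all

lemma mat_adjoint_one [simp]: "mat_adjoint (1\<^sub>m n :: complex mat) = 1\<^sub>m n"
  by (rule eq_matI) simp_all

lemma mat_adjoint_zero [simp]: "mat_adjoint (0\<^sub>m m n :: complex mat) = 0\<^sub>m n m"
  by (rule eq_matI) simp_all

lemma mat_adjoint_add:
  "A \<in> carrier_mat m n \<Longrightarrow> B \<in> carrier_mat m n \<Longrightarrow>
    mat_adjoint (A + B :: complex mat) = mat_adjoint A + mat_adjoint B"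
  by (rule eq_matI) auto

lemma mat_adjoint_smult: "mat_adjoint (c \<cdot>\<^sub>m (A :: complex mat)) = cnj c \<cdot>\<^sub>m mat_adjoint A"
  by (rule eq_matI) simp_all

lemma mat_adjoint_mult:
  assumes "dim_col A = dim_row B"
  shows "mat_adjoint ((A :: complex mat) * B) = mat_adjoint B * mat_adjoint A"
proof (rule eq_matI)
  fix i j assume "i < dim_row (mat_adjoint B * mat_adjoint A)" and "j < dim_col (mat_adjoint B * mat_adjoint A)"
  then have i: "i < dim_col B" and j: "j < dim_row A" by simp_all
  have "mat_adjoint (A * B) $$ (i, j) = cnj (\<Sum>k<dim_col A. A $$ (j, k) * B $$ (k, i))"
    using assms i j by (simp add: scalar_prod_def lessThan_atLeast0)
  also have "\<dots> = (\<Sum>k<dim_col A. cnj (B $$ (k, i)) * cnj (A $$ (j, k)))"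
    by (simp add: mult.commute)
  also have "\<dots> = (mat_adjoint B * mat_adjoint A) $$ (i, j)"
    using assms i j by (simp add: scalar_prod_def lessThan_atLeast0)
  finally show "mat_adjoint (A * B) $$ (i, j) = (mat_adjoint B * mat_adjoint A) $$ (i, j)" .
qed simp_all

lemma mat_adjoint_four_block_mat:
  assumes "(A :: complex mat) \<in> carrier_mat m1 n1" "B \<in> carrier_mat m1 n2"
    "C \<in> carrier_mat m2 n1" "D \<in> carrier_mat m2 n2"
  shows "mat_adjoint (four_block_mat A B C D) =
    four_block_mat (mat_adjoint A) (mat_adjoint C) (mat_adjoint B) (mat_adjoint D)"
  using assms by (intro eq_matI) auto

lemma eq_0_if_adjoint_mult_self_eq_0:
  assumes w: "(w :: complex mat) \<in> carrier_mat m 1" and "(mat_adjoint w * w) $$ (0, 0) = 0"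
  shows "w = 0\<^sub>m m 1"
proof -
  have "(mat_adjoint w * w) $$ (0, 0) = of_real (\<Sum>i<m. (cmod (w $$ (i, 0)))\<^sup>2)"
    using w by (simp add: scalar_prod_def lessThan_atLeast0 of_real_sum complex_norm_square
        mult.commute del: of_real_power)
  then have "complex_of_real (\<Sum>i<m. (cmod (w $$ (i, 0)))\<^sup>2) = 0"
    using assms(2) by metis
  then have "(\<Sum>i<m. (cmod (w $$ (i, 0)))\<^sup>2) = 0"
    by (simp only: of_real_eq_0_iff)
  then have "\<forall>i<m. (cmod (w $$ (i, 0)))\<^sup>2 = 0"
    by (subst (asm) sum_nonneg_eq_0_iff) auto
  then show ?thesis
    using w by (intro eq_matI) auto
qed

lemma assoc_mult_mat' [simp]:
  "dim_col A = dim_row B \<Longrightarrow> dim_col B = dim_row C \<Longrightarrow> A * B * C = A * (B * (C :: 'a :: semiring_0 mat))"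
  by (rule assoc_mult_mat[of A "dim_row A" "dim_col A" B "dim_col B" C "dim_col C"]) auto

lemma mult_add_distrib_mat':
  "dim_col A = dim_row B \<Longrightarrow> dim_row B = dim_row C \<Longrightarrow> dim_col B = dim_col C \<Longrightarrow>
    A * (B + C) = A * B + A * (C :: 'a :: semiring_0 mat)"
  by (rule mult_add_distrib_mat[of A "dim_row A" "dim_col A" B "dim_col B"]) auto

lemma add_mult_distrib_mat':
  "dim_row A = dim_row B \<Longrightarrow> dim_col A = dim_col B \<Longrightarrow> dim_col B = dim_row C \<Longrightarrow>
    (A + B) * C = A * C + B * (C :: 'a :: semiring_0 mat)"
  by (rule add_mult_distrib_mat[of A "dim_row A" "dim_col A" B C "dim_col C"]) auto

lemma mult_minus_distrib_mat':
  "dim_col A = dim_row B \<Longrightarrow> dim_row B = dim_row C \<Longrightarrow> dim_col B = dim_col C \<Longrightarrow>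
    A * (B - C) = A * B - A * (C :: 'a :: ring mat)"
  by (rule mult_minus_distrib_mat[of A "dim_row A" "dim_col A" B "dim_col B"]) auto

lemma minus_mult_distrib_mat':
  "dim_row A = dim_row B \<Longrightarrow> dim_col A = dim_col B \<Longrightarrow> dim_col B = dim_row C \<Longrightarrow>
    (A - B) * C = A * C - B * (C :: 'a :: ring mat)"
  by (rule minus_mult_distrib_mat[of A "dim_row A" "dim_col A" B C "dim_col C"]) auto

lemma mult_smult_distrib_mat':
  "dim_col A = dim_row B \<Longrightarrow> A * (c \<cdot>\<^sub>m B) = c \<cdot>\<^sub>m (A * (B :: 'a :: comm_semiring_0 mat))"
  by (rule mult_smult_distrib[of A "dim_row A" "dim_col A" B "dim_col B"]) auto

lemma smult_mult_assoc_mat':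
  "dim_col A = dim_row B \<Longrightarrow> (c \<cdot>\<^sub>m A) * B = c \<cdot>\<^sub>m (A * (B :: 'a :: comm_semiring_0 mat))"
  by (rule mult_smult_assoc_mat[of A "dim_row A" "dim_col A" B "dim_col B"]) auto

lemmas mult_distrib_mat' = mult_add_distrib_mat' add_mult_distrib_mat' mult_minus_distrib_mat'
  minus_mult_distrib_mat' mult_smult_distrib_mat' smult_mult_assoc_mat'

lemma mat_adjoint_sandwich:
  assumes "dim_col B = dim_row Z" "dim_col Z = dim_col B"
  shows "mat_adjoint ((B :: complex mat) * Z * mat_adjoint B) = B * mat_adjoint Z * mat_adjoint B"
  using assms by (simp add: mat_adjoint_mult)

lemma is_MP_inverse_unique:
  assumes X: "is_MP_inverse A X" and Y: "is_MP_inverse A Y"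
  shows "X = Y"
proof -
  have [simp]: "dim_row X = dim_col A" "dim_col X = dim_row A" "dim_row Y = dim_col A" "dim_col Y = dim_row A"
    using X Y unfolding is_MP_inverse_def by auto
  from X have X1: "A * X * A = A" and X2: "X * A * X = X" and X3: "mat_adjoint (A * X) = A * X"
    and X4: "mat_adjoint (X * A) = X * A" unfolding is_MP_inverse_def by auto
  from Y have Y1: "A * Y * A = A" and Y3: "mat_adjoint (A * Y) = A * Y"
    and Y4: "mat_adjoint (Y * A) = Y * A" unfolding is_MP_inverse_def by auto
  have AX: "A * X = A * Y"
  proof -
    have "A * X = (A * Y * A) * X" by (simp only: Y1)
    also have "\<dots> = (A * Y) * (A * X)" by simp
    also have "\<dots> = mat_adjoint (A * Y) * mat_adjoint (A * X)" by (simp only: X3 Y3)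
    also have "\<dots> = mat_adjoint ((A * X) * (A * Y))" by (rule mat_adjoint_mult[symmetric]) simp
    also have "(A * X) * (A * Y) = (A * X * A) * Y" by simp
    finally show ?thesis by (simp only: X1 Y3)
  qed
  have XA: "X * A = Y * A"
  proof -
    have "X * A = X * (A * Y * A)" by (simp only: Y1)
    also have "\<dots> = (X * A) * (Y * A)" by simp
    also have "\<dots> = mat_adjoint (X * A) * mat_adjoint (Y * A)" by (simp only: X4 Y4)
    also have "\<dots> = mat_adjoint ((Y * A) * (X * A))" by (rule mat_adjoint_mult[symmetric]) simp
    also have "(Y * A) * (X * A) = Y * (A * X * A)" by simp
    finally show ?thesis by (simp only: X1 Y4)
  qed
  have "X = X * (A * X)" by (simp add: X2 flip: assoc_mult_mat')
  also have "\<dots> = (Y * A) * Y" by (simp add: AX flip: XA)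
  also have "\<dots> = Y" using Y unfolding is_MP_inverse_def by simp
  finally show ?thesis .
qed

lemma MP_inverse_eqI: "is_MP_inverse A X \<Longrightarrow> MP_inverse A = X"
  unfolding MP_inverse_def using is_MP_inverse_unique by blast

lemma is_MP_inverse_inverse:
  assumes "A \<in> carrier_mat n n" "X \<in> carrier_mat n n" "A * X = 1\<^sub>m n" "X * A = 1\<^sub>m n"
  shows "is_MP_inverse A X"
  using assms unfolding is_MP_inverse_def by simp

definition orth_projector :: "nat \<Rightarrow> complex mat \<Rightarrow> bool" where
  "orth_projector m P \<longleftrightarrow> P \<in> carrier_mat m m \<and> mat_adjoint P = P \<and> P * P = P"

lemma orth_projector_mult_residual:
  assumes "orth_projector m P" "a \<in> carrier_mat m k"
  shows "P * (a - P * a) = 0\<^sub>m m k"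
proof -
  have [simp]: "dim_row P = m" "dim_col P = m" "dim_row a = m" "dim_col a = k"
    using assms unfolding orth_projector_def by auto
  have "P * (a - P * a) = P * a - P * a"
    using assms unfolding orth_projector_def by (simp add: mult_distrib_mat' flip: assoc_mult_mat')
  then show ?thesis
    by (intro eq_matI) simp_all
qed

context
  fixes m :: nat and P w :: "complex mat" and c :: complex
  assumes P: "orth_projector m P" and w: "w \<in> carrier_mat m 1" and Pw: "P * w = 0\<^sub>m m 1"
    and c: "c * (mat_adjoint w * w) $$ (0, 0) = 1"
begin

private lemma dim_P_w [simp]: "dim_row P = m" "dim_col P = m" "dim_row w = m" "dim_col w = 1"
  using P w unfolding orth_projector_def by auto

private lemma P_herm: "mat_adjoint P = P" and P_idem: "P * P = P"
  using P unfolding orth_projector_def by auto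

private lemma adjoint_w_mult_P: "mat_adjoint w * P = 0\<^sub>m 1 m"
proof -
  have "mat_adjoint w * P = mat_adjoint (P * w)"
    by (simp add: mat_adjoint_mult P_herm)
  then show ?thesis
    by (simp add: Pw)
qed

private lemma smult_adjoint_w_mult_w: "c \<cdot>\<^sub>m (mat_adjoint w * w) = 1\<^sub>m 1"
  using c by (intro eq_matI) auto

private lemma cnj_c: "cnj c = c"
proof -
  have "cnj ((mat_adjoint w * w) $$ (0, 0)) = mat_adjoint (mat_adjoint w * w) $$ (0, 0)"
    by simp
  also have "mat_adjoint (mat_adjoint w * w) = mat_adjoint w * w"
    by (simp add: mat_adjoint_mult)
  finally have "cnj c * (mat_adjoint w * w) $$ (0, 0) = 1"
    using arg_cong[OF c, of cnj] by simp
  with c show ?thesis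
    by (metis mult.commute mult_cancel_left mult_zero_left zero_neq_one)
qed

private lemma rank_one_mult: "x \<in> carrier_mat m k \<Longrightarrow>
    (P + c \<cdot>\<^sub>m (w * mat_adjoint w)) * x = P * x + w * (c \<cdot>\<^sub>m (mat_adjoint w * x))"
  by (simp add: mult_distrib_mat')

lemma rank_one_update_mult_self: "(P + c \<cdot>\<^sub>m (w * mat_adjoint w)) * w = w"
  unfolding rank_one_mult[OF w] Pw smult_adjoint_w_mult_w right_mult_one_mat[OF w]
  by (rule left_add_zero_mat[OF w])

lemma rank_one_update_fixes:
  assumes x: "x \<in> carrier_mat m k" and Px: "P * x = x"
  shows "(P + c \<cdot>\<^sub>m (w * mat_adjoint w)) * x = x"
proof -
  have "mat_adjoint w * x = (mat_adjoint w * P) * x"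
    using x by (simp add: Px)
  then have "mat_adjoint w * x = 0\<^sub>m 1 k"
    using x by (simp add: adjoint_w_mult_P)
  then show ?thesis
    unfolding rank_one_mult[OF x] Px using x by simp
qed

lemma rank_one_update_fixes_residual:
  assumes a: "a \<in> carrier_mat m 1" and w_def: "w = a - P * a"
  shows "(P + c \<cdot>\<^sub>m (w * mat_adjoint w)) * a = a"
proof -
  note [simp] = carrier_matD[OF a]
  have split: "P * a + w = a"
    unfolding w_def by (intro eq_matI) simp_all
  have "(P + c \<cdot>\<^sub>m (w * mat_adjoint w)) * a = (P + c \<cdot>\<^sub>m (w * mat_adjoint w)) * (P * a + w)"
    by (simp only: split)
  also have "\<dots> = (P + c \<cdot>\<^sub>m (w * mat_adjoint w)) * (P * a) + (P + c \<cdot>\<^sub>m (w * mat_adjoint w)) * w"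
    by (simp add: mult_distrib_mat')
  also have "(P + c \<cdot>\<^sub>m (w * mat_adjoint w)) * (P * a) = P * a"
    by (rule rank_one_update_fixes[of "P * a" 1]) (simp_all add: P_idem carrier_matI flip: assoc_mult_mat')
  finally show ?thesis
    unfolding rank_one_update_mult_self split .
qed

lemma orth_projector_rank_one_update: "orth_projector m (P + c \<cdot>\<^sub>m (w * mat_adjoint w))"
  unfolding orth_projector_def
proof (intro conjI)
  let ?P' = "P + c \<cdot>\<^sub>m (w * mat_adjoint w)"
  show "?P' \<in> carrier_mat m m"
    by (intro carrier_matI) simp_all
  have "mat_adjoint ?P' = mat_adjoint P + mat_adjoint (c \<cdot>\<^sub>m (w * mat_adjoint w))"
    by (rule mat_adjoint_add[of _ m m]; intro carrier_matI; simp)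
  then show "mat_adjoint ?P' = ?P'"
    by (simp add: mat_adjoint_smult mat_adjoint_mult P_herm cnj_c)
  have "?P' * ?P' = ?P' * P + ?P' * (c \<cdot>\<^sub>m (w * mat_adjoint w))"
    by (simp add: mult_distrib_mat')
  also have "?P' * P = P"
    using P P_idem unfolding orth_projector_def by (intro rank_one_update_fixes) auto
  also have "?P' * (c \<cdot>\<^sub>m (w * mat_adjoint w)) = c \<cdot>\<^sub>m ((?P' * w) * mat_adjoint w)"
    by (simp add: mult_distrib_mat' del: dim_P_w)
  finally show "?P' * ?P' = ?P'"
    unfolding rank_one_update_mult_self .
qed

end

lemma least_squares_inverse_extend:
  fixes A C V u :: "complex mat"
  assumes A: "A \<in> carrier_mat m n" and C: "C \<in> carrier_mat n m"
    and proj: "orth_projector m (A * C)" and V: "V \<in> carrier_mat m k" and fixV: "A * C * V = V"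
    and u: "u \<in> carrier_mat n 1"
  obtains C' where "C' \<in> carrier_mat n m" "orth_projector m (A * C')"
    "A * C' * V = V" "A * C' * (A * u) = A * u"
proof -
  define P a where "P = A * C" and "a = A * u"
  define w where "w = a - P * a"
  have [simp]: "dim_row A = m" "dim_col A = n" "dim_row C = n" "dim_col C = m"
    "dim_row u = n" "dim_col u = 1"
    using A C u by auto
  have a: "a \<in> carrier_mat m 1" and w: "w \<in> carrier_mat m 1"
    unfolding a_def w_def P_def by (auto intro!: carrier_matI)
  have Pw: "P * w = 0\<^sub>m m 1"
    unfolding w_def P_def by (rule orth_projector_mult_residual[OF proj a])
  consider "w = 0\<^sub>m m 1" | "(mat_adjoint w * w) $$ (0, 0) \<noteq> 0"
    using eq_0_if_adjoint_mult_self_eq_0[OF w] by blast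
  then show thesis
  proof cases
    case 1
    have "P * a = a"
    proof (rule eq_matI)
      fix i j assume "i < dim_row a" "j < dim_col a"
      then show "(P * a) $$ (i, j) = a $$ (i, j)"
        using arg_cong[OF 1, of "\<lambda>M. M $$ (i, j)"] unfolding w_def P_def a_def by simp
    qed (simp_all add: P_def a_def)
    then show thesis
      using that[OF C proj fixV] unfolding P_def a_def by simp
  next
    case 2
    define c where "c = 1 / (mat_adjoint w * w) $$ (0, 0)"
    define C' where "C' = C + c \<cdot>\<^sub>m ((u - C * a) * mat_adjoint w)"
    have c: "c * (mat_adjoint w * w) $$ (0, 0) = 1"
      unfolding c_def using 2 by simp
    have AC': "A * C' = P + c \<cdot>\<^sub>m (w * mat_adjoint w)"
      unfolding C'_def w_def P_def a_def by (simp add: mult_distrib_mat')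
    have "C' \<in> carrier_mat n m"
      unfolding C'_def using a w by (auto intro!: carrier_matI)
    moreover have "orth_projector m (A * C')"
      unfolding AC' using orth_projector_rank_one_update[OF proj[folded P_def] w Pw c] .
    moreover have "A * C' * V = V"
      unfolding AC' using rank_one_update_fixes[OF proj[folded P_def] w Pw c V fixV[folded P_def]] .
    moreover have "A * C' * (A * u) = A * u"
      unfolding AC' a_def[symmetric] using rank_one_update_fixes_residual[OF proj[folded P_def] w Pw c a w_def] .
    ultimately show thesis
      by (rule that)
  qed
qed

lemma least_squares_inverse_leading_columns:
  fixes A :: "complex mat" and m n :: nat
  defines "E k \<equiv> mat_diag n (\<lambda>i. if i < k then 1 else 0)"
  assumes A: "A \<in> carrier_mat m n"
  shows "\<exists>C \<in> carrier_mat n m. orth_projector m (A * C) \<and> A * C * (A * E k) = A * E k"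
proof (induction k)
  case 0
  have "E 0 = 0\<^sub>m n n"
    unfolding E_def mat_diag_def by (intro eq_matI) auto
  then show ?case
    using A by (intro bexI[of _ "0\<^sub>m n m"]) (auto simp: orth_projector_def)
next
  case (Suc k)
  have "E j \<in> carrier_mat n n" for j
    unfolding E_def by simp
  then have [simp]: "dim_row A = m" "dim_col A = n" "dim_row (E j) = n" "dim_col (E j) = n" for j
    using A by auto
  from Suc obtain C where C: "C \<in> carrier_mat n m" and proj: "orth_projector m (A * C)"
    and fix_k: "A * C * (A * E k) = A * E k"
    by blast
  define u :: "complex mat" where "u = mat n 1 (\<lambda>(i, j). if i = k then 1 else 0)"
  have u: "u \<in> carrier_mat n 1"
    unfolding u_def by simp
  have E_Suc: "E (Suc k) = E k + u * mat_adjoint u"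
    unfolding E_def u_def mat_diag_def by (intro eq_matI) (auto simp: scalar_prod_def)
  obtain C' where C': "C' \<in> carrier_mat n m" "orth_projector m (A * C')"
    and fix_Ek: "A * C' * (A * E k) = A * E k" and fix_u: "A * C' * (A * u) = A * u"
  proof (rule least_squares_inverse_extend[OF A C proj _ fix_k u])
    show "A * E k \<in> carrier_mat m n"
      by (intro carrier_matI) simp_all
  qed
  have "A * C' * (A * E (Suc k)) = A * C' * (A * E k) + A * C' * (A * u) * mat_adjoint u"
    using C' u unfolding E_Suc by (simp add: mult_distrib_mat')
  also have "\<dots> = A * E (Suc k)"
    using u unfolding fix_Ek fix_u E_Suc by (simp add: mult_distrib_mat')
  finally show ?case
    using C' by blast
qed

lemma ex_least_squares_inverse:
  assumes A: "(A :: complex mat) \<in> carrier_mat m n"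
  obtains C where "C \<in> carrier_mat n m" "A * C * A = A" "mat_adjoint (A * C) = A * C"
proof -
  have "mat_diag n (\<lambda>i. if i < n then 1 else 0) = (1\<^sub>m n :: complex mat)"
    unfolding mat_diag_def by (intro eq_matI) auto
  then obtain C where C: "C \<in> carrier_mat n m" and proj: "orth_projector m (A * C)"
    and "A * C * (A * 1\<^sub>m n) = A * 1\<^sub>m n"
    using least_squares_inverse_leading_columns[OF A, of n] by auto
  then have "A * C * A = A"
    using A by simp
  then show thesis
    using that C proj unfolding orth_projector_def by blast
qed

(* D\<^sup>* is a {1,4}-inverse of A, and D\<^sup>* A C is Urquhart's formula for the Moore-Penrose inverse. *)
lemma ex_is_MP_inverse: "\<exists>X. is_MP_inverse (A :: complex mat) X"
proof -
  define m n where "m = dim_row A" and "n = dim_col A"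
  then have A: "A \<in> carrier_mat m n"
    by auto
  obtain C where C: "C \<in> carrier_mat n m" and ACA: "A * C * A = A"
    and AC: "mat_adjoint (A * C) = A * C"
    using ex_least_squares_inverse[OF A] .
  obtain D where D: "D \<in> carrier_mat m n" and ADA: "mat_adjoint A * D * mat_adjoint A = mat_adjoint A"
    and AD: "mat_adjoint (mat_adjoint A * D) = mat_adjoint A * D"
    using ex_least_squares_inverse[OF mat_adjoint_carrier[OF A]] .
  have [simp]: "dim_row C = n" "dim_col C = m" "dim_row D = m" "dim_col D = n"
    using C D by auto
  have DA: "mat_adjoint D * A = mat_adjoint A * D"
    using AD by (simp add: mat_adjoint_mult m_def n_def)
  have ADA': "A * (mat_adjoint D * A) = A"
    using arg_cong[OF ADA, of mat_adjoint] by (simp add: mat_adjoint_mult m_def n_def)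
  define X where "X = mat_adjoint D * A * C"
  have AX: "A * X = A * C"
    unfolding X_def using ADA' by (simp flip: assoc_mult_mat' add: m_def n_def)
  have XA: "X * A = mat_adjoint D * A"
    unfolding X_def using ACA by (simp add: m_def n_def)
  have "is_MP_inverse A X"
    unfolding is_MP_inverse_def
  proof (intro conjI)
    show "X \<in> carrier_mat (dim_col A) (dim_row A)"
      unfolding X_def by (intro carrier_matI) (simp_all add: m_def n_def)
    show "A * X * A = A"
      unfolding AX by (rule ACA)
    have "X * A * X = mat_adjoint D * A * X"
      by (simp only: XA)
    also have "\<dots> = mat_adjoint D * (A * (mat_adjoint D * A)) * C"
      unfolding X_def by (simp add: m_def n_def)
    finally show "X * A * X = X"
      unfolding ADA' X_def .
    show "mat_adjoint (A * X) = A * X"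
      unfolding AX by (rule AC)
    show "mat_adjoint (X * A) = X * A"
      unfolding XA DA by (rule AD)
  qed
  then show ?thesis ..
qed

lemma is_MP_inverse_MP_inverse: "is_MP_inverse A (MP_inverse A)"
  using ex_is_MP_inverse MP_inverse_eqI by metis

context
  fixes P Q :: "complex mat" and p k l q :: nat
  assumes P: "P \<in> carrier_mat p k" and Q: "Q \<in> carrier_mat l q"
    and PP: "mat_adjoint P * P = 1\<^sub>m k" and QQ: "Q * mat_adjoint Q = 1\<^sub>m l"
begin

private lemma dim_P_Q [simp]: "dim_row P = p" "dim_col P = k" "dim_row Q = l" "dim_col Q = q"
  using P Q by auto

lemma is_MP_inverse_isometry_mult:
  assumes M: "M \<in> carrier_mat k l" and X: "is_MP_inverse M X"
  shows "is_MP_inverse (P * M * Q) (mat_adjoint Q * X * mat_adjoint P)"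
proof -
  have [simp]: "dim_row M = k" "dim_col M = l" "dim_row X = l" "dim_col X = k"
    using M X unfolding is_MP_inverse_def by auto
  from X have X1: "M * X * M = M" and X2: "X * M * X = X"
    and X3: "mat_adjoint (M * X) = M * X" and X4: "mat_adjoint (X * M) = X * M"
    unfolding is_MP_inverse_def by auto
  let ?A = "P * M * Q" and ?Y = "mat_adjoint Q * X * mat_adjoint P"
  have AY: "?A * ?Y = P * (M * X) * mat_adjoint P"
  proof -
    have "?A * ?Y = P * M * (Q * mat_adjoint Q) * X * mat_adjoint P" by simp
    then show ?thesis unfolding QQ by simp
  qed
  have YA: "?Y * ?A = mat_adjoint Q * (X * M) * Q"
  proof -
    have "?Y * ?A = mat_adjoint Q * X * (mat_adjoint P * P) * M * Q" by simp
    then show ?thesis unfolding PP by simp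
  qed
  show ?thesis
    unfolding is_MP_inverse_def
  proof (intro conjI)
    show "?Y \<in> carrier_mat (dim_col ?A) (dim_row ?A)"
      by (intro carrier_matI) simp_all
    have "?A * ?Y * ?A = P * M * X * (mat_adjoint P * P) * M * Q"
      unfolding AY by simp
    also have "\<dots> = P * (M * X * M) * Q"
      unfolding PP by simp
    finally show "?A * ?Y * ?A = ?A"
      unfolding X1 by simp
    have "?Y * ?A * ?Y = mat_adjoint Q * X * M * (Q * mat_adjoint Q) * X * mat_adjoint P"
      unfolding YA by simp
    also have "\<dots> = mat_adjoint Q * (X * M * X) * mat_adjoint P"
      unfolding QQ by simp
    finally show "?Y * ?A * ?Y = ?Y"
      unfolding X2 by simp
    show "mat_adjoint (?A * ?Y) = ?A * ?Y"
      unfolding AY by (subst mat_adjoint_sandwich) (simp_all add: X3)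
    show "mat_adjoint (?Y * ?A) = ?Y * ?A"
      using mat_adjoint_sandwich[of "mat_adjoint Q" "X * M"] unfolding YA by (simp add: X4)
  qed
qed

lemma MP_inverse_isometry_mult:
  "M \<in> carrier_mat k l \<Longrightarrow> MP_inverse (P * M * Q) = mat_adjoint Q * MP_inverse M * mat_adjoint P"
  by (intro MP_inverse_eqI is_MP_inverse_isometry_mult is_MP_inverse_MP_inverse)

lemma isometry_sandwich_eq_iff:
  assumes "Z1 \<in> carrier_mat l k" "Z2 \<in> carrier_mat l k"
  shows "mat_adjoint Q * Z1 * mat_adjoint P = mat_adjoint Q * Z2 * mat_adjoint P \<longleftrightarrow> Z1 = Z2"
proof
  have recover: "Q * (mat_adjoint Q * Z * mat_adjoint P) * P = Z" if "Z \<in> carrier_mat l k" for Z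
  proof -
    have "Q * (mat_adjoint Q * Z * mat_adjoint P) * P = (Q * mat_adjoint Q) * Z * (mat_adjoint P * P)"
      using that by simp
    then show ?thesis
      using that unfolding PP QQ by simp
  qed
  show "Z1 = Z2" if "mat_adjoint Q * Z1 * mat_adjoint P = mat_adjoint Q * Z2 * mat_adjoint P"
    using recover[OF assms(1)] recover[OF assms(2)] that by metis
qed simp

end

(* The block column [I; 0] and the block row [K L] are written as four_block_mat with
   blocks of height or width zero. *)
lemma four_block_mat_zero_size:
  "A \<in> carrier_mat m n \<Longrightarrow> D \<in> carrier_mat 0 0 \<Longrightarrow> four_block_mat A B C D = A"
  by (intro eq_matI) auto

lemma adjoint_embedding_mult_embedding:
  "mat_adjoint (four_block_mat (1\<^sub>m r) (0\<^sub>m r 0) (0\<^sub>m k r) (0\<^sub>m k 0)) *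
    four_block_mat (1\<^sub>m r) (0\<^sub>m r 0) (0\<^sub>m k r) (0\<^sub>m k 0) = (1\<^sub>m r :: complex mat)"
proof -
  have "mat_adjoint (four_block_mat (1\<^sub>m r) (0\<^sub>m r 0) (0\<^sub>m k r) (0\<^sub>m k 0)) =
      four_block_mat (1\<^sub>m r :: complex mat) (0\<^sub>m r k) (0\<^sub>m 0 r) (0\<^sub>m 0 k)"
    by (subst mat_adjoint_four_block_mat[of _ r r _ 0 _ k]) auto
  also have "\<dots> * four_block_mat (1\<^sub>m r) (0\<^sub>m r 0) (0\<^sub>m k r) (0\<^sub>m k 0) =
      four_block_mat (1\<^sub>m r * 1\<^sub>m r + 0\<^sub>m r k * 0\<^sub>m k r) (1\<^sub>m r * 0\<^sub>m r 0 + 0\<^sub>m r k * 0\<^sub>m k 0)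
        (0\<^sub>m 0 r * 1\<^sub>m r + 0\<^sub>m 0 k * 0\<^sub>m k r) (0\<^sub>m 0 r * 0\<^sub>m r 0 + 0\<^sub>m 0 k * 0\<^sub>m k 0)"
    by (rule mult_four_block_mat) auto
  also have "\<dots> = 1\<^sub>m r"
    by (subst four_block_mat_zero_size[of _ r r]) auto
  finally show ?thesis .
qed

context
  fixes r k :: nat and K L :: "complex mat"
  assumes K: "K \<in> carrier_mat r r" and L: "L \<in> carrier_mat r k"
begin

private lemma dim_K_L [simp]: "dim_row K = r" "dim_col K = r" "dim_row L = r" "dim_col L = k"
  using K L by auto

lemma row_block_mult_adjoint:
  "four_block_mat K L (0\<^sub>m 0 r) (0\<^sub>m 0 k) * mat_adjoint (four_block_mat K L (0\<^sub>m 0 r) (0\<^sub>m 0 k)) =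
    K * mat_adjoint K + L * mat_adjoint L"
proof -
  have "mat_adjoint (four_block_mat K L (0\<^sub>m 0 r) (0\<^sub>m 0 k)) =
      four_block_mat (mat_adjoint K) (0\<^sub>m r 0) (mat_adjoint L) (0\<^sub>m k 0)"
    by (simp add: mat_adjoint_four_block_mat[OF K L zero_carrier_mat zero_carrier_mat])
  also have "four_block_mat K L (0\<^sub>m 0 r) (0\<^sub>m 0 k) * \<dots> =
      four_block_mat (K * mat_adjoint K + L * mat_adjoint L) (K * 0\<^sub>m r 0 + L * 0\<^sub>m k 0)
        (0\<^sub>m 0 r * mat_adjoint K + 0\<^sub>m 0 k * mat_adjoint L) (0\<^sub>m 0 r * 0\<^sub>m r 0 + 0\<^sub>m 0 k * 0\<^sub>m k 0)"
    by (rule mult_four_block_mat) (auto simp: K L)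
  also have "\<dots> = K * mat_adjoint K + L * mat_adjoint L"
    using K L by (subst four_block_mat_zero_size[of _ r r]) auto
  finally show ?thesis .
qed

lemma row_block_mult_embedding:
  "four_block_mat K L (0\<^sub>m 0 r) (0\<^sub>m 0 k) * four_block_mat (1\<^sub>m r) (0\<^sub>m r 0) (0\<^sub>m k r) (0\<^sub>m k 0) = K"
proof -
  have "four_block_mat K L (0\<^sub>m 0 r) (0\<^sub>m 0 k) * four_block_mat (1\<^sub>m r) (0\<^sub>m r 0) (0\<^sub>m k r) (0\<^sub>m k 0) =
      four_block_mat (K * 1\<^sub>m r + L * 0\<^sub>m k r) (K * 0\<^sub>m r 0 + L * 0\<^sub>m k 0)
        (0\<^sub>m 0 r * 1\<^sub>m r + 0\<^sub>m 0 k * 0\<^sub>m k r) (0\<^sub>m 0 r * 0\<^sub>m r 0 + 0\<^sub>m 0 k * 0\<^sub>m k 0)"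
    by (rule mult_four_block_mat) (auto simp: K L)
  also have "\<dots> = K"
    using K L by (subst four_block_mat_zero_size[of _ r r]) auto
  finally show ?thesis .
qed

lemma embedding_mult_row_block:
  assumes M: "M \<in> carrier_mat r r"
  shows "four_block_mat (1\<^sub>m r) (0\<^sub>m r 0) (0\<^sub>m k r) (0\<^sub>m k 0) * M * four_block_mat K L (0\<^sub>m 0 r) (0\<^sub>m 0 k) =
    four_block_mat (M * K) (M * L) (0\<^sub>m k r) (0\<^sub>m k k)"
proof -
  have [simp]: "dim_row M = r" "dim_col M = r"
    using M by auto
  have "four_block_mat (1\<^sub>m r) (0\<^sub>m r 0) (0\<^sub>m k r) (0\<^sub>m k 0) * M =
      four_block_mat (1\<^sub>m r) (0\<^sub>m r 0) (0\<^sub>m k r) (0\<^sub>m k 0) *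
        four_block_mat M (0\<^sub>m r 0) (0\<^sub>m 0 r) (0\<^sub>m 0 0)"
    using M by (simp add: four_block_mat_zero_size)
  also have "\<dots> = four_block_mat M (0\<^sub>m r 0) (0\<^sub>m k r) (0\<^sub>m k 0)"
    by (subst mult_four_block_mat[of _ r r _ 0 _ k]) (auto intro!: cong_four_block_mat)
  also have "\<dots> * four_block_mat K L (0\<^sub>m 0 r) (0\<^sub>m 0 k) =
      four_block_mat (M * K) (M * L) (0\<^sub>m k r) (0\<^sub>m k k)"
    by (subst mult_four_block_mat[of _ r r _ 0 _ k]) (auto intro!: cong_four_block_mat)
  finally show ?thesis .
qed

end

lemma hartwig_spindelboeck_factorization:
  assumes U: "unitary_mat n U" and r: "r \<le> n"
    and K: "K \<in> carrier_mat r r" and L: "L \<in> carrier_mat r (n - r)"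
    and KL: "K * mat_adjoint K + L * mat_adjoint L = 1\<^sub>m r"
  obtains P Q where "P \<in> carrier_mat n r" "Q \<in> carrier_mat r n"
    "mat_adjoint P * P = 1\<^sub>m r" "Q * mat_adjoint Q = 1\<^sub>m r" "Q * P = K"
    "\<And>M. M \<in> carrier_mat r r \<Longrightarrow>
      U * four_block_mat (M * K) (M * L) (0\<^sub>m (n - r) r) (0\<^sub>m (n - r) (n - r)) * mat_adjoint U = P * M * Q"
proof
  define J :: "complex mat" where "J = four_block_mat (1\<^sub>m r) (0\<^sub>m r 0) (0\<^sub>m (n - r) r) (0\<^sub>m (n - r) 0)"
  define R where "R = four_block_mat K L (0\<^sub>m 0 r) (0\<^sub>m 0 (n - r))"
  have U_carrier: "U \<in> carrier_mat n n" and UU: "mat_adjoint U * U = 1\<^sub>m n"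
    using U unfolding unitary_mat_def by auto
  have J: "J \<in> carrier_mat n r" and R: "R \<in> carrier_mat r n"
    unfolding J_def R_def using K L r by (auto intro!: carrier_matI)
  have [simp]: "dim_row U = n" "dim_col U = n" "dim_row J = n" "dim_col J = r" "dim_row R = r" "dim_col R = n"
    using U_carrier J R by auto
  show "U * J \<in> carrier_mat n r" "R * mat_adjoint U \<in> carrier_mat r n"
    by (auto intro!: carrier_matI)
  have JJ: "mat_adjoint J * J = 1\<^sub>m r"
    unfolding J_def by (rule adjoint_embedding_mult_embedding)
  have RR: "R * mat_adjoint R = 1\<^sub>m r"
    unfolding R_def row_block_mult_adjoint[OF K L] by (rule KL)
  have RJ: "R * J = K"
    unfolding R_def J_def by (rule row_block_mult_embedding[OF K L])
  have "mat_adjoint (U * J) * (U * J) = mat_adjoint J * (mat_adjoint U * U) * J"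
    by (simp add: mat_adjoint_mult)
  then show "mat_adjoint (U * J) * (U * J) = 1\<^sub>m r"
    unfolding UU using JJ by simp
  have "R * mat_adjoint U * mat_adjoint (R * mat_adjoint U) = R * (mat_adjoint U * U) * mat_adjoint R"
    by (simp add: mat_adjoint_mult)
  then show "R * mat_adjoint U * mat_adjoint (R * mat_adjoint U) = 1\<^sub>m r"
    unfolding UU using RR by simp
  have "R * mat_adjoint U * (U * J) = R * (mat_adjoint U * U) * J"
    by simp
  then show "R * mat_adjoint U * (U * J) = K"
    unfolding UU using RJ by simp
  show "U * four_block_mat (M * K) (M * L) (0\<^sub>m (n - r) r) (0\<^sub>m (n - r) (n - r)) * mat_adjoint U =
      U * J * M * (R * mat_adjoint U)" if M: "M \<in> carrier_mat r r" for M
  proof -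
    have [simp]: "dim_row M = r" "dim_col M = r"
      using M by auto
    have "four_block_mat (M * K) (M * L) (0\<^sub>m (n - r) r) (0\<^sub>m (n - r) (n - r)) = J * M * R"
      unfolding J_def R_def by (rule embedding_mult_row_block[OF K L M, symmetric])
    then show ?thesis
      by simp
  qed
qed

lemma is_MP_inverse_mat_diag:
  assumes "\<And>i. i < n \<Longrightarrow> f i \<noteq> 0"
  shows "is_MP_inverse (mat_diag n f) (mat_diag n (\<lambda>i. 1 / f i))"
proof (rule is_MP_inverse_inverse)
  show "mat_diag n f * mat_diag n (\<lambda>i. 1 / f i) = 1\<^sub>m n" "mat_diag n (\<lambda>i. 1 / f i) * mat_diag n f = 1\<^sub>m n"
    unfolding mat_diag_diag using assms by (auto intro!: eq_matI simp: mat_diag_def)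
qed simp_all

lemma MP_inverse_square_isometry_factor_iff:
  assumes P: "P \<in> carrier_mat n r" and Q: "Q \<in> carrier_mat r n"
    and PP: "mat_adjoint P * P = 1\<^sub>m r" and QQ: "Q * mat_adjoint Q = 1\<^sub>m r"
    and S: "S \<in> carrier_mat r r" and S': "is_MP_inverse S S'" and K: "K \<in> carrier_mat r r"
    and QP: "Q * P = K"
  shows "MP_inverse (P * S * Q * (P * S * Q)) = MP_inverse (P * S * Q) * MP_inverse (P * S * Q) \<longleftrightarrow>
    MP_inverse (S * K * S) = S' * mat_adjoint K * S'"
proof -
  have SKS: "S * K * S \<in> carrier_mat r r"
    using S K by auto
  have [simp]: "dim_row P = n" "dim_col P = r" "dim_row Q = r" "dim_col Q = n" "dim_row K = r" "dim_col K = r"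
    "dim_row S = r" "dim_col S = r" "dim_row S' = r" "dim_col S' = r"
    using P Q K S S' unfolding is_MP_inverse_def by auto
  have "MP_inverse (P * S * Q) = mat_adjoint Q * S' * mat_adjoint P"
    by (intro MP_inverse_eqI is_MP_inverse_isometry_mult[OF P Q PP QQ S S'])
  then have "MP_inverse (P * S * Q) * MP_inverse (P * S * Q) =
      mat_adjoint Q * S' * (mat_adjoint P * mat_adjoint Q) * S' * mat_adjoint P"
    by simp
  also have "mat_adjoint P * mat_adjoint Q = mat_adjoint K"
    unfolding QP[symmetric] by (simp add: mat_adjoint_mult)
  finally have MP_sq: "MP_inverse (P * S * Q) * MP_inverse (P * S * Q) =
      mat_adjoint Q * (S' * mat_adjoint K * S') * mat_adjoint P"
    by simp
  have "P * S * Q * (P * S * Q) = P * (S * (Q * P) * S) * Q"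
    by simp
  then have MP_BB: "MP_inverse (P * S * Q * (P * S * Q)) = mat_adjoint Q * MP_inverse (S * K * S) * mat_adjoint P"
    unfolding QP using MP_inverse_isometry_mult[OF P Q PP QQ SKS] by simp
  have "MP_inverse (S * K * S) \<in> carrier_mat r r"
    using is_MP_inverse_MP_inverse[of "S * K * S"] unfolding is_MP_inverse_def by simp
  then show ?thesis
    unfolding MP_BB MP_sq
    by (rule isometry_sandwich_eq_iff[OF P Q PP QQ]) (intro carrier_matI; simp)
qed

theorem corollary5p4:
  fixes n r :: nat and B U K L :: "complex mat" and s :: "nat \<Rightarrow> real"
  assumes B: "B \<in> carrier_mat n n"
    and Bnz: "B \<noteq> 0\<^sub>m n n"
    and rk: "vec_space.rank n B = r"
    and r: "0 < r" "r \<le> n"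
    and U: "unitary_mat n U"
    and s: "\<And>i. i < r \<Longrightarrow> s i > 0"
    and K: "K \<in> carrier_mat r r"
    and L: "L \<in> carrier_mat r (n - r)"
    and KL: "K * mat_adjoint K + L * mat_adjoint L = 1\<^sub>m r"
    and HS: "B = U * four_block_mat
                  (mat_diag r (\<lambda>i. complex_of_real (s i)) * K)
                  (mat_diag r (\<lambda>i. complex_of_real (s i)) * L)
                  (0\<^sub>m (n - r) r) (0\<^sub>m (n - r) (n - r)) * mat_adjoint U"
  shows "MP_inverse (B * B) = MP_inverse B * MP_inverse B \<longleftrightarrow>
    MP_inverse (mat_diag r (\<lambda>i. complex_of_real (s i)) * K * mat_diag r (\<lambda>i. complex_of_real (s i)))
      = mat_diag r (\<lambda>i. complex_of_real (1 / s i)) * mat_adjoint K * mat_diag r (\<lambda>i. complex_of_real (1 / s i))"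
proof -
  define S where "S = mat_diag r (\<lambda>i. complex_of_real (s i))"
  define S' where "S' = mat_diag r (\<lambda>i. complex_of_real (1 / s i))"
  obtain P Q where P: "P \<in> carrier_mat n r" and Q: "Q \<in> carrier_mat r n"
    and PP: "mat_adjoint P * P = 1\<^sub>m r" and QQ: "Q * mat_adjoint Q = 1\<^sub>m r" and QP: "Q * P = K"
    and factor: "\<And>M. M \<in> carrier_mat r r \<Longrightarrow>
      U * four_block_mat (M * K) (M * L) (0\<^sub>m (n - r) r) (0\<^sub>m (n - r) (n - r)) * mat_adjoint U = P * M * Q"
    using hartwig_spindelboeck_factorization[OF U r(2) K L KL] by blast
  have S: "S \<in> carrier_mat r r"
    unfolding S_def by simp
  have "is_MP_inverse S S'"
    unfolding S_def S'_def of_real_divide of_real_1 using s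
    by (intro is_MP_inverse_mat_diag) (metis of_real_eq_0_iff less_irrefl)
  moreover have "B = P * S * Q"
    unfolding HS S_def[symmetric] using factor[OF S] .
  ultimately show ?thesis
    unfolding S_def[symmetric] S'_def[symmetric]
    using MP_inverse_square_isometry_factor_iff[OF P Q PP QQ S _ K QP] by blast
qed

end
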